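(* Let $f\in\mathcal{F}$ and $V>0$. Then the FCC lattice $D_3$, the BCC lattice $D_3^*$ and the simple cubic lattice $\mathbb Z^3$ (each of volume $V$) are critical points of $L\mapsto E_f[L]$ among Bravais lattices of fixed volume $V$, i.e. the gradient of $(u,v,x,y,z)\mapsto E_f(u,v,x,y,z)$ vanishes at the parameters of each of these lattices.
   Context: Fix $V>0$ and set $C:=V^{2/3}2^{1/3}$. Every Bravais lattice $L\subset\mathbb R^3$ of covolume $V$ is parametrized by $(u,v,x,y,z)$ with $u,v>0$, $x,y,z\in\mathbb R$, via the basis $v_1=\sqrt C(1/\sqrt u,0,0)$, $v_2=\sqrt C(x/\sqrt u,v/\sqrt u,0)$, $v_3=\sqrt C(y/\sqrt u,vz/\sqrt u,u/(v\sqrt2))$; its quadratic form is $Q_L(m,n,p)=\frac{C}{u}\big[(m+xn+yp)^2+v^2(n+zp)^2+\frac{u^3}{2v^2}p^2\big]$. Let $\mathcal F$ be the set of $f\in C^2((0,\infty))$ such that for each $k\in\{0,1,2\}$, $|f^{(k)}(r)|=O(r^{-3/2-k-\eta_k})$ as $r\to\infty$ for some $\eta_k>0$. For $f\in\mathcal F$, $E_f[L]=E_f(u,v,x,y,z):=\sum_{(m,n,p)\in\mathbb Z^3\setminus\{0\}} f(Q_L(m,n,p))=\sum_{q\in L\setminus\{0\}}f(|q|^2)$, viewed as a function of the five variables $(u,v,x,y,z)$ at fixed $V$. The FCC lattice $D_3$ of volume $V$ has parameters $(u,v,x,y,z)=(1,1,0,1/2,1/2)$; the simple cubic lattice $\mathbb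 Z^3$ of volume $V$ has parameters $(2^{1/3},1,0,0,0)$; $D_3^*$ denotes the BCC lattice (the dual lattice of the FCC lattice) rescaled to volume $V$. Criticality/local optimality of a lattice among Bravais lattices of volume $V$ means criticality/local optimality of $E_f$ as a function of $(u,v,x,y,z)$ at its parameters. *)

theory Defs
  imports "HOL-Analysis.Analysis" "HOL-Library.Landau_Symbols"
begin

definition class_F :: "(real \<Rightarrow> real) \<Rightarrow> bool" where
  "class_F f \<longleftrightarrow>
     (\<exists>f1 f2 :: real \<Rightarrow> real.
        (\<forall>r>0. (f has_real_derivative f1 r) (at r)) \<and>
        (\<forall>r>0. (f1 has_real_derivative f2 r) (at r)) \<and>
        continuous_on {0<..} f2 \<and>
        (\<exists>\<eta>>0. f \<in> O[at_top](\<lambda>r. r powr (-3/2 - \<eta>))) \<and>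
        (\<exists>\<eta>>0. f1 \<in> O[at_top](\<lambda>r. r powr (-3/2 - 1 - \<eta>))) \<and>
        (\<exists>\<eta>>0. f2 \<in> O[at_top](\<lambda>r. r powr (-3/2 - 2 - \<eta>))))"

definition constC :: "real \<Rightarrow> real" where
  "constC V = V powr (2/3) * 2 powr (1/3)"

definition QL :: "real \<Rightarrow> real \<times> real \<times> real \<times> real \<times> real \<Rightarrow> int \<times> int \<times> int \<Rightarrow> real" where
  "QL V w k = (case w of (u, v, x, y, z) \<Rightarrow> case k of (m, n, p) \<Rightarrow>
      constC V / u * ((m + x * n + y * p)^2 + v^2 * (n + z * p)^2 + u^3 / (2 * v^2) * p^2))"

definition Ef :: "(real \<Rightarrow> real) \<Rightarrow> real \<Rightarrow> real \<times> real \<times> real \<times> real \<times> real \<Rightarrow> real" where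
  "Ef f V w = (\<Sum>\<^sub>\<infinity>k\<in>(UNIV - {(0,0,0)}). f (QL V w k))"

definition FCC_params :: "real \<times> real \<times> real \<times> real \<times> real" where
  "FCC_params = (1, 1, 0, 1/2, 1/2)"
definition BCC_params :: "real \<times> real \<times> real \<times> real \<times> real" where
  "BCC_params = (2 powr (-1/3), 1, 0, 1/2, 1/2)"
definition SC_params :: "real \<times> real \<times> real \<times> real \<times> real" where
  "SC_params = (2 powr (1/3), 1, 0, 0, 0)"

end

(*
  E_f is differentiated term by term. On an open convex box of parameters containing the three
  lattices, Q_L(k) is bounded below by a constant times |k|^2 and its parameter derivative is
  bounded by a constant times |k|^2 |h|; with the decay of f and f' this gives summable majorants
  for the series and for the series of derivatives.

  At each of the three lattices there is an injective linear map T of Z^3 onto a lattice that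
  is invariant under the symmetry group of the cube, such that Q_L(k) is a multiple of |T k|^2
  and every directional derivative of Q_L(k) is a quadratic form in T k with zero trace. Summing
  such a form against a radial weight over a cube-symmetric set gives zero: coordinate swaps
  equalise the three diagonal moments and sign changes kill the mixed ones.
*)
theory Submission
  imports Defs
begin

section \<open>Term-by-term differentiation of infinite sums\<close>

lemma summable_on_dominated:
  fixes f :: "'i \<Rightarrow> real"
  assumes "g summable_on A" "\<And>x. x \<in> A \<Longrightarrow> \<bar>f x\<bar> \<le> g x"
  shows "f summable_on A"
proof -
  have "(\<lambda>x. norm (f x)) summable_on A"
    by (rule Infinite_Sum.abs_summable_on_comparison_test'[OF assms(1)]) (use assms(2) in simp)
  then show ?thesis by (subst summable_on_iff_abs_summable_on_real)
qed

lemma has_sum_diff: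
  fixes f g :: "'i \<Rightarrow> 'a::topological_ab_group_add"
  assumes "(f has_sum a) A" "(g has_sum b) A"
  shows "((\<lambda>x. f x - g x) has_sum (a - b)) A"
proof -
  have "((\<lambda>x. - g x) has_sum - b) A" using assms(2) by (simp add: has_sum_uminus)
  from has_sum_add[OF assms(1) this] show ?thesis by simp
qed

lemma bounded_linear_infsum:
  fixes D :: "'i \<Rightarrow> 'a::real_normed_vector \<Rightarrow> real"
  assumes lin: "\<And>i. i \<in> I \<Longrightarrow> linear (D i)"
    and bnd: "\<And>i h. i \<in> I \<Longrightarrow> \<bar>D i h\<bar> \<le> B i * norm h"
    and B: "B summable_on I"
  shows "bounded_linear (\<lambda>h. \<Sum>\<^sub>\<infinity>i\<in>I. D i h)"
proof (rule bounded_linear_intro[where K = "infsum B I"])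
  have sum: "(\<lambda>i. D i h) summable_on I" for h
    by (rule summable_on_dominated[OF summable_on_cmult_left[OF B]]) (use bnd in auto)
  show "(\<Sum>\<^sub>\<infinity>i\<in>I. D i (x + y)) = (\<Sum>\<^sub>\<infinity>i\<in>I. D i x) + (\<Sum>\<^sub>\<infinity>i\<in>I. D i y)" for x y
    by (subst infsum_add[symmetric]) (use sum lin in \<open>auto intro: infsum_cong simp: linear_add\<close>)
  show "(\<Sum>\<^sub>\<infinity>i\<in>I. D i (r *\<^sub>R x)) = r *\<^sub>R (\<Sum>\<^sub>\<infinity>i\<in>I. D i x)" for r x
    using lin by (simp add: linear_scale infsum_cmult_right' cong: infsum_cong)
  show "norm (\<Sum>\<^sub>\<infinity>i\<in>I. D i x) \<le> norm x * infsum B I" for x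
  proof -
    have "norm (\<Sum>\<^sub>\<infinity>i\<in>I. D i x) \<le> (\<Sum>\<^sub>\<infinity>i\<in>I. B i * norm x)"
      by (rule norm_infsum_le[OF has_sum_infsum has_sum_infsum])
         (use sum B summable_on_cmult_left bnd in auto)
    also have "\<dots> = norm x * infsum B I" by (simp add: infsum_cmult_left' mult.commute)
    finally show ?thesis .
  qed
qed

lemma infsum_tail_le:
  fixes B :: "'i \<Rightarrow> real"
  assumes "B summable_on I" "e > 0"
  obtains F where "finite F" "F \<subseteq> I" "\<bar>infsum B (I - F)\<bar> \<le> e"
proof -
  obtain F where F: "finite F" "F \<subseteq> I" "dist (sum B F) (infsum B I) \<le> e"
    using infsum_finite_approximation[OF assms] by blast
  have "infsum B I = sum B F + infsum B (I - F)"
    using infsum_Un_disjoint[of B F "I - F"] F summable_on_subset[OF assms(1), of "I - F"]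
    by (simp add: Un_absorb1)
  with F show ?thesis by (intro that) (auto simp: dist_real_def)
qed

lemma linearization_error_le:
  fixes \<phi> :: "'a::{real_normed_vector,perfect_space} \<Rightarrow> real"
  assumes "convex S" "w0 \<in> S" "y \<in> S"
    and der: "\<And>w. w \<in> S \<Longrightarrow> (\<phi> has_derivative D w) (at w)"
    and bnd: "\<And>w h. w \<in> S \<Longrightarrow> \<bar>D w h\<bar> \<le> B * norm h"
  shows "\<bar>\<phi> y - \<phi> w0 - D w0 (y - w0)\<bar> \<le> 2 * B * norm (y - w0)"
proof -
  have "norm (\<phi> y - \<phi> w0 - D w0 (y - w0)) \<le> norm (y - w0) * (2 * B)"
  proof (rule differentiable_bound_linearization[where S = S])
    show "w0 + t *\<^sub>R (y - w0) \<in> S" if "t \<in> {0..1}" for t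
      using convexD_alt[OF assms(1-3), of t] that by (simp add: algebra_simps)
    show "(\<phi> has_derivative D w) (at w within S)" if "w \<in> S" for w
      using der[OF that] by (rule has_derivative_at_withinI)
    show "onorm (D w - D w0) \<le> 2 * B" if "w \<in> S" for w
    proof (rule onorm_le)
      fix h
      have "\<bar>D w h - D w0 h\<bar> \<le> \<bar>D w h\<bar> + \<bar>D w0 h\<bar>" by (rule abs_triangle_ineq4)
      also have "\<dots> \<le> 2 * B * norm h" using bnd[OF that, of h] bnd[OF assms(2), of h] by simp
      finally show "norm ((D w - D w0) h) \<le> 2 * B * norm h" by simp
    qed
  qed fact
  then show ?thesis by (simp add: mult.commute)
qed

lemma infsum_linearization_error_le:
  fixes \<phi> :: "'i \<Rightarrow> 'a::{real_normed_vector,perfect_space} \<Rightarrow> real"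
  assumes S: "convex S" "w0 \<in> S" "y \<in> S" and F: "finite F" "F \<subseteq> I"
    and der: "\<And>i w. i \<in> I \<Longrightarrow> w \<in> S \<Longrightarrow> (\<phi> i has_derivative D i w) (at w)"
    and bnd: "\<And>i w h. i \<in> I \<Longrightarrow> w \<in> S \<Longrightarrow> \<bar>D i w h\<bar> \<le> B i * norm h"
    and B: "B summable_on I"
    and sum: "\<And>w. w \<in> S \<Longrightarrow> (\<lambda>i. \<phi> i w) summable_on I"
  shows "\<bar>(\<Sum>\<^sub>\<infinity>i\<in>I. \<phi> i y) - (\<Sum>\<^sub>\<infinity>i\<in>I. \<phi> i w0) - (\<Sum>\<^sub>\<infinity>i\<in>I. D i w0 (y - w0))\<bar>
    \<le> \<bar>\<Sum>i\<in>F. \<phi> i y - \<phi> i w0 - D i w0 (y - w0)\<bar> + 2 * norm (y - w0) * \<bar>infsum B (I - F)\<bar>"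
proof -
  define r where "r i = \<phi> i y - \<phi> i w0 - D i w0 (y - w0)" for i
  have "(\<lambda>i. D i w0 (y - w0)) summable_on I"
    by (rule summable_on_dominated[OF summable_on_cmult_left[OF B]]) (use bnd S(2) in auto)
  then have r: "(r has_sum (\<Sum>\<^sub>\<infinity>i\<in>I. \<phi> i y) - (\<Sum>\<^sub>\<infinity>i\<in>I. \<phi> i w0) - (\<Sum>\<^sub>\<infinity>i\<in>I. D i w0 (y - w0))) I"
    unfolding r_def using sum S(2,3) by (intro has_sum_diff has_sum_infsum) auto
  then have tail_sum: "r summable_on I - F"
    using summable_on_subset[of r I] by (auto simp: has_sum_imp_summable)
  have "norm (infsum r (I - F)) \<le> (\<Sum>\<^sub>\<infinity>i\<in>I - F. 2 * norm (y - w0) * B i)"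
  proof (rule norm_infsum_le[OF has_sum_infsum[OF tail_sum] has_sum_infsum])
    show "(\<lambda>i. 2 * norm (y - w0) * B i) summable_on I - F"
      using summable_on_subset[OF B] by (intro summable_on_cmult_right) auto
    show "norm (r i) \<le> 2 * norm (y - w0) * B i" if "i \<in> I - F" for i
      using linearization_error_le[OF S der bnd, of i] that by (simp add: r_def mult_ac)
  qed
  also have "\<dots> \<le> 2 * norm (y - w0) * \<bar>infsum B (I - F)\<bar>"
    by (simp add: infsum_cmult_right' mult_left_mono)
  moreover have "infsum r I = sum r F + infsum r (I - F)"
    using infsum_Un_disjoint[of r F "I - F"] F tail_sum by (simp add: Un_absorb1)
  ultimately show ?thesis
    using infsumI[OF r] by (simp add: r_def)
qed

lemma has_derivative_infsum:
  fixes \<phi> :: "'i \<Rightarrow> 'a::{real_normed_vector,perfect_space} \<Rightarrow> real"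
  assumes S: "open S" "convex S" "w0 \<in> S"
    and der: "\<And>i w. i \<in> I \<Longrightarrow> w \<in> S \<Longrightarrow> (\<phi> i has_derivative D i w) (at w)"
    and bnd: "\<And>i w h. i \<in> I \<Longrightarrow> w \<in> S \<Longrightarrow> \<bar>D i w h\<bar> \<le> B i * norm h"
    and B: "B summable_on I"
    and sum: "\<And>w. w \<in> S \<Longrightarrow> (\<lambda>i. \<phi> i w) summable_on I"
  shows "((\<lambda>w. \<Sum>\<^sub>\<infinity>i\<in>I. \<phi> i w) has_derivative (\<lambda>h. \<Sum>\<^sub>\<infinity>i\<in>I. D i w0 h)) (at w0)"
  unfolding has_derivative_at_alt
proof (intro conjI allI impI)
  have "linear (D i w0)" if "i \<in> I" for i
    using der[OF that S(3)] by (simp add: has_derivative_linear)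
  then show "bounded_linear (\<lambda>h. \<Sum>\<^sub>\<infinity>i\<in>I. D i w0 h)"
    using bnd S(3) B by (intro bounded_linear_infsum) auto
  fix e :: real assume "e > 0"
  then obtain F where F: "finite F" "F \<subseteq> I" "\<bar>infsum B (I - F)\<bar> \<le> e/4"
    using infsum_tail_le[OF B] by (metis divide_pos_pos zero_less_numeral)
  have "((\<lambda>w. \<Sum>i\<in>F. \<phi> i w) has_derivative (\<lambda>h. \<Sum>i\<in>F. D i w0 h)) (at w0)"
    using der F(2) S(3) by (intro has_derivative_sum) auto
  with \<open>e > 0\<close> obtain d1 where d1: "d1 > 0" "\<And>y. norm (y - w0) < d1 \<Longrightarrow>
      \<bar>(\<Sum>i\<in>F. \<phi> i y) - (\<Sum>i\<in>F. \<phi> i w0) - (\<Sum>i\<in>F. D i w0 (y - w0))\<bar> \<le> e/2 * norm (y - w0)"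
    unfolding has_derivative_at_alt by (metis real_norm_def half_gt_zero)
  obtain d2 where d2: "d2 > 0" "ball w0 d2 \<subseteq> S" using S(1,3) open_contains_ball by blast
  show "\<exists>d>0. \<forall>y. norm (y - w0) < d \<longrightarrow> norm ((\<Sum>\<^sub>\<infinity>i\<in>I. \<phi> i y) - (\<Sum>\<^sub>\<infinity>i\<in>I. \<phi> i w0)
      - (\<Sum>\<^sub>\<infinity>i\<in>I. D i w0 (y - w0))) \<le> e * norm (y - w0)"
  proof (intro exI[of _ "min d1 d2"] conjI allI impI)
    fix y assume y: "norm (y - w0) < min d1 d2"
    then have "y \<in> S" using d2 by (auto simp: dist_norm norm_minus_commute)
    have "2 * norm (y - w0) * \<bar>infsum B (I - F)\<bar> \<le> 2 * norm (y - w0) * (e/4)"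
      using F(3) by (intro mult_left_mono) auto
    then show "norm ((\<Sum>\<^sub>\<infinity>i\<in>I. \<phi> i y) - (\<Sum>\<^sub>\<infinity>i\<in>I. \<phi> i w0) - (\<Sum>\<^sub>\<infinity>i\<in>I. D i w0 (y - w0)))
        \<le> e * norm (y - w0)"
      using infsum_linearization_error_le[OF S(2,3) \<open>y \<in> S\<close> F(1,2) der bnd B sum] d1(2)[of y] y
      by (simp add: sum_subtractf)
  qed (use d1 d2 in simp)
qed

section \<open>Lattice sums\<close>

abbreviation nonzero_points :: "(int \<times> int \<times> int) set"
  where "nonzero_points \<equiv> UNIV - {(0, 0, 0)}"

definition sqnorm :: "int \<times> int \<times> int \<Rightarrow> real" where
  "sqnorm = (\<lambda>(a, b, c). of_int a ^ 2 + of_int b ^ 2 + of_int c ^ 2)"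

lemma sqnorm_triple [simp]: "sqnorm (a, b, c) = of_int a ^ 2 + of_int b ^ 2 + of_int c ^ 2"
  by (simp add: sqnorm_def)

lemma sqnorm_nonneg: "sqnorm k \<ge> 0"
  by (auto simp: sqnorm_def split: prod.splits)

lemma sqnorm_ge_1:
  assumes "k \<in> nonzero_points"
  shows "sqnorm k \<ge> 1"
proof -
  obtain a b c where k: "k = (a, b, c)" "a \<noteq> 0 \<or> b \<noteq> 0 \<or> c \<noteq> 0"
    using assms by (cases k) auto
  then have "1 \<le> a^2 + b^2 + c^2"
    by (smt (verit) power2_less_eq_zero_iff zero_le_power2)
  then have "1 \<le> real_of_int (a^2 + b^2 + c^2)" by linarith
  then show ?thesis by (simp add: sqnorm_def k)
qed

lemma summable_on_int_powr:
  fixes \<beta> :: real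
  assumes "\<beta> > 1/2"
  shows "(\<lambda>m::int. (1 + of_int m ^ 2) powr (-\<beta>)) summable_on UNIV"
proof -
  define g where "g m = (1 + of_int m ^ 2) powr (-\<beta>)" for m :: int
  have "summable (\<lambda>n. real (Suc n) powr (-2*\<beta>))"
    using assms by (subst summable_Suc_iff) (simp add: summable_real_powr_iff)
  then have "summable (\<lambda>n. g (int n))"
  proof (rule summable_comparison_test'[OF summable_mult[of _ "2 powr \<beta>"]])
    fix n :: nat
    have "(real (Suc n))^2 / 2 \<le> 1 + (real n)^2"
      using sum_squares_bound[of "real n" 1] by (simp add: power2_eq_square field_simps)
    then have "g (int n) \<le> ((real (Suc n))^2 / 2) powr (-\<beta>)"
      unfolding g_def using assms by (intro powr_mono2') auto
    also have "\<dots> = ((real (Suc n))^2) powr (-\<beta>) * 2 powr \<beta>"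
      by (subst powr_divide) (auto simp: powr_minus field_simps)
    also have "((real (Suc n))^2) powr (-\<beta>) = real (Suc n) powr (-2*\<beta>)"
    proof -
      have "(real (Suc n))^2 = real (Suc n) powr 2" by (subst powr_numeral) auto
      then show ?thesis by (simp only: powr_powr) (simp add: mult.commute)
    qed
    finally show "norm (g (int n)) \<le> 2 powr \<beta> * real (Suc n) powr (-2*\<beta>)"
      by (simp add: g_def mult.commute)
  qed
  then have nat_sum: "(\<lambda>n. g (int n)) summable_on UNIV"
    by (rule summable_nonneg_imp_summable_on) (simp add: g_def)
  have "g summable_on (range int \<union> range (\<lambda>n. - int n))"
  proof (rule summable_on_union)
    show "g summable_on range int"
      using nat_sum by (subst summable_on_reindex) (auto simp: o_def)
    show "g summable_on range (\<lambda>n. - int n)"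
      using nat_sum by (subst summable_on_reindex) (auto simp: o_def inj_on_def g_def)
  qed
  moreover have "range int \<union> range (\<lambda>n. - int n) = UNIV"
    by (auto intro: int_cases2)
  ultimately have "g summable_on UNIV" by simp
  then show ?thesis unfolding g_def[abs_def] .
qed

lemma summable_on_Times_mult:
  fixes a b :: "_ \<Rightarrow> real"
  assumes "a summable_on A" "b summable_on B" "\<And>x. x \<in> A \<Longrightarrow> a x \<ge> 0" "\<And>y. y \<in> B \<Longrightarrow> b y \<ge> 0"
  shows "(\<lambda>(x, y). a x * b y) summable_on (A \<times> B)"
proof (rule summable_on_SigmaI[where g = "\<lambda>x. a x * infsum b B"])
  show "((\<lambda>y. case (x, y) of (x, y) \<Rightarrow> a x * b y) has_sum a x * infsum b B) B" for x
    using assms(2) by (auto intro: has_sum_cmult_right)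
  show "(\<lambda>x. a x * infsum b B) summable_on A"
    using assms(1) by (rule summable_on_cmult_left)
qed (use assms(3,4) in auto)

lemma summable_on_sqnorm_powr:
  fixes \<alpha> :: real
  assumes "\<alpha> > 3/2"
  shows "(\<lambda>k. sqnorm k powr (-\<alpha>)) summable_on nonzero_points"
proof -
  define g where "g m = (1 + of_int m ^ 2) powr (-(\<alpha>/3))" for m :: int
  have g: "g summable_on UNIV" "\<And>m. g m \<ge> 0"
    using summable_on_int_powr[of "\<alpha>/3"] assms by (auto simp: g_def[abs_def])
  have prod_sum: "(\<lambda>(a, b, c). g a * (g b * g c)) summable_on UNIV"
    using summable_on_Times_mult[OF g(1) summable_on_Times_mult[OF g(1) g(1)]] g(2)
    by (simp add: case_prod_beta' mult_nonneg_nonneg)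
  have "(\<lambda>k. 2 powr \<alpha> * (case k of (a, b, c) \<Rightarrow> g a * (g b * g c))) summable_on nonzero_points"
    using summable_on_subset[OF prod_sum subset_UNIV] by (rule summable_on_cmult_right)
  then show ?thesis
  proof (rule summable_on_comparison_test)
    fix k assume k: "k \<in> nonzero_points"
    obtain a b c where abc: "k = (a, b, c)" by (cases k)
    define N where "N = sqnorm k"
    have N: "N \<ge> 1" using sqnorm_ge_1[OF k] by (simp add: N_def)
    have sq: "of_int a ^ 2 \<le> N" "of_int b ^ 2 \<le> N" "of_int c ^ 2 \<le> N"
      by (auto simp: N_def sqnorm_def abc)
    have P: "(1 + of_int a ^ 2) * (1 + of_int b ^ 2) * (1 + of_int c ^ 2) \<le> (2 * N) ^ 3"
    proof -
      have "(1 + of_int a ^ 2) * (1 + of_int b ^ 2) * (1 + of_int c ^ 2) \<le> (2 * N) * (2 * N) * (2 * N)"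
        using sq N by (intro mult_mono) auto
      then show ?thesis by (simp add: power3_eq_cube)
    qed
    have "(2 * N) powr (-\<alpha>) = ((2 * N) ^ 3) powr (-(\<alpha>/3))"
    proof -
      have "(2 * N) ^ 3 = (2 * N) powr 3" using N by (subst powr_numeral) auto
      then show ?thesis by (simp only: powr_powr) simp
    qed
    also have "\<dots> \<le> ((1 + of_int a ^ 2) * (1 + of_int b ^ 2) * (1 + of_int c ^ 2)) powr (-(\<alpha>/3))"
      using P assms by (intro powr_mono2') (auto intro!: mult_pos_pos add_pos_nonneg)
    also have "\<dots> = g a * (g b * g c)"
      by (simp add: g_def powr_mult add_pos_nonneg)
    finally have "N powr (-\<alpha>) \<le> 2 powr \<alpha> * (g a * (g b * g c))"
      using N by (simp add: powr_mult powr_minus field_simps)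
    then show "sqnorm k powr (-\<alpha>) \<le> 2 powr \<alpha> * (case k of (a, b, c) \<Rightarrow> g a * (g b * g c))"
      by (simp add: abc N_def del: sqnorm_triple)
  qed simp
qed

section \<open>The quadratic forms on a box of parameters\<close>

text \<open>The box contains the parameters of all three lattices; on it Q_L is uniformly comparable
  to the Euclidean norm of the index.\<close>

definition param_box :: "(real \<times> real \<times> real \<times> real \<times> real) set" where
  "param_box = {1/2<..<2} \<times> {1/2<..<2} \<times> {-1<..<1} \<times> {-1<..<1} \<times> {-1<..<1}"

lemma open_param_box: "open param_box"
  unfolding param_box_def by (intro open_Times) auto

lemma convex_param_box: "convex param_box"
  unfolding param_box_def by (intro convex_Times) auto

definition QL_deriv ::
    "real \<Rightarrow> real \<times> real \<times> real \<times> real \<times> real \<Rightarrow> int \<times> int \<times> int \<Rightarrow> real \<times> real \<times> real \<times> real \<times> real \<Rightarrow> real"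
  where
  "QL_deriv V w k h = (case w of (u, v, x, y, z) \<Rightarrow> case k of (m, n, p) \<Rightarrow>
     case h of (hu, hv, hx, hy, hz) \<Rightarrow>
     let A = m + x * n + y * p; B = n + z * p in
     constC V * (hu * (- (A^2) / u^2 - v^2 * B^2 / u^2 + u * p^2 / v^2)
       + hv * (2 * v * B^2 / u - u^2 * p^2 / v^3)
       + hx * (2 * A * n / u) + hy * (2 * A * p / u) + hz * (2 * v^2 * B * p / u)))"

lemma QL_has_derivative:
  assumes "fst w \<noteq> 0" "fst (snd w) \<noteq> 0"
  shows "((\<lambda>w. QL V w k) has_derivative QL_deriv V w k) (at w)"
proof -
  obtain m n p where k: "k = (m, n, p)" by (cases k)
  obtain u v x y z where w: "w = (u, v, x, y, z)" by (cases w)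
  have "u \<noteq> 0" "v \<noteq> 0" using assms w by auto
  define M N P where "M = real_of_int m" and "N = real_of_int n" and "P = real_of_int p"
  have QL_eq: "QL V w' k = constC V / fst w' *
      ((M + fst (snd (snd w')) * N + fst (snd (snd (snd w'))) * P)^2
      + (fst (snd w'))^2 * (N + snd (snd (snd (snd w'))) * P)^2
      + (fst w')^3 / (2 * (fst (snd w'))^2) * P^2)" for w'
    by (auto simp: QL_def k M_def N_def P_def split: prod.splits)
  show ?thesis unfolding QL_eq
    apply (rule has_derivative_eq_rhs)
     apply (rule derivative_eq_intros refl | simp add: w \<open>u \<noteq> 0\<close> \<open>v \<noteq> 0\<close>)+
    apply (rule ext)
    apply (simp add: QL_deriv_def w k M_def N_def P_def Let_def split: prod.splits)
    apply (simp add: field_simps \<open>u \<noteq> 0\<close> \<open>v \<noteq> 0\<close> power2_eq_square power3_eq_cube)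
    done
qed

lemma cauchy_schwarz3:
  fixes a1 a2 a3 b1 b2 b3 :: real
  shows "(a1*b1 + a2*b2 + a3*b3)^2 \<le> (a1^2 + a2^2 + a3^2) * (b1^2 + b2^2 + b3^2)"
proof -
  have "(a1^2 + a2^2 + a3^2) * (b1^2 + b2^2 + b3^2) - (a1*b1 + a2*b2 + a3*b3)^2
      = (a1*b2 - a2*b1)^2 + (a1*b3 - a3*b1)^2 + (a2*b3 - a3*b2)^2"
    by (simp add: power2_eq_square algebra_simps)
  moreover have "0 \<le> (a1*b2 - a2*b1)^2 + (a1*b3 - a3*b1)^2 + (a2*b3 - a3*b2)^2" by simp
  ultimately show ?thesis by linarith
qed

lemma shear_bounds:
  fixes x y z M N P :: real
  assumes "\<bar>x\<bar> \<le> 1" "\<bar>y\<bar> \<le> 1" "\<bar>z\<bar> \<le> 1"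
  defines "S \<equiv> M^2 + N^2 + P^2"
  shows "(M + x*N + y*P)^2 \<le> 3 * S" and "(N + z*P)^2 \<le> 2 * S"
    and "S \<le> 9 * ((M + x*N + y*P)^2 + (N + z*P)^2 + P^2)"
proof -
  have "\<bar>x*z\<bar> \<le> 1" unfolding abs_mult using assms by (intro mult_le_one) auto
  then have "\<bar>x*z - y\<bar> \<le> 2" using assms(2) by linarith
  then have "(x*z - y)^2 \<le> 2^2" by (metis abs_le_square_iff abs_numeral)
  then have sq: "x^2 \<le> 1" "y^2 \<le> 1" "z^2 \<le> 1" "(x*z - y)^2 \<le> 4"
    using assms by (auto simp: abs_square_le_1)
  have "(M + x*N + y*P)^2 \<le> (1^2 + x^2 + y^2) * S"
    using cauchy_schwarz3[of 1 M x N y P] by (simp add: S_def)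
  also have "\<dots> \<le> 3 * S" using sq by (intro mult_right_mono) (auto simp: S_def)
  finally show "(M + x*N + y*P)^2 \<le> 3 * S" .
  have "(N + z*P)^2 \<le> (0^2 + 1^2 + z^2) * S"
    using cauchy_schwarz3[of 0 M 1 N z P] by (simp add: S_def)
  also have "\<dots> \<le> 2 * S" using sq by (intro mult_right_mono) (auto simp: S_def)
  finally show "(N + z*P)^2 \<le> 2 * S" .
  define A B where "A = M + x*N + y*P" and "B = N + z*P"
  have "M^2 = (1*A + (-x)*B + (x*z - y)*P)^2" by (simp add: A_def B_def algebra_simps)
  also have "\<dots> \<le> (1^2 + (-x)^2 + (x*z - y)^2) * (A^2 + B^2 + P^2)" by (rule cauchy_schwarz3)
  also have "\<dots> \<le> 6 * (A^2 + B^2 + P^2)" using sq by (intro mult_right_mono) auto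
  finally have M2: "M^2 \<le> 6 * (A^2 + B^2 + P^2)" .
  have "N^2 = (0*A + 1*B + (-z)*P)^2" by (simp add: B_def)
  also have "\<dots> \<le> (0^2 + 1^2 + (-z)^2) * (A^2 + B^2 + P^2)" by (rule cauchy_schwarz3)
  also have "\<dots> \<le> 2 * (A^2 + B^2 + P^2)" using sq by (intro mult_right_mono) auto
  finally have "N^2 \<le> 2 * (A^2 + B^2 + P^2)" .
  with M2 have "S \<le> 9 * (A^2 + B^2 + P^2)"
    unfolding S_def using zero_le_power2[of A] zero_le_power2[of B] by argo
  then show "S \<le> 9 * ((M + x*N + y*P)^2 + (N + z*P)^2 + P^2)"
    by (simp add: A_def B_def)
qed

lemma constC_pos: "V > 0 \<Longrightarrow> constC V > 0"
  by (simp add: constC_def)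

lemma param_box_bounds:
  assumes "(u, v, x, y, z) \<in> param_box"
  shows "1/2 < u" "u < 2" "1/2 < v" "v < 2" "\<bar>x\<bar> \<le> 1" "\<bar>y\<bar> \<le> 1" "\<bar>z\<bar> \<le> 1"
  using assms by (auto simp: param_box_def)

lemma QL_ge_sqnorm:
  assumes "w \<in> param_box" "V > 0"
  shows "constC V / 288 * sqnorm k \<le> QL V w k"
proof -
  obtain u v x y z where w: "w = (u, v, x, y, z)" by (cases w)
  obtain m n p where k: "k = (m, n, p)" by (cases k)
  note b = param_box_bounds[OF assms(1)[unfolded w]]
  define M N P where "M = real_of_int m" and "N = real_of_int n" and "P = real_of_int p"
  define A B where "A = M + x*N + y*P" and "B = N + z*P"
  have "(1/2)^2 < u^2" "(1/2)^2 < v^2" "v^2 < 2^2"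
    using b power_strict_mono[of "1/2" u 2] power_strict_mono[of "1/2" v 2] power_strict_mono[of v 2 2]
    by auto
  then have c: "1/32 \<le> 1/u" "1/32 \<le> v^2/u" "1/32 \<le> u^2/(2* v^2)"
    using b by (auto simp: field_simps)
  define E where "E = 1/u * A^2 + v^2/u * B^2 + u^2/(2 * v^2) * P^2"
  have "(A^2 + B^2 + P^2) / 32 \<le> E"
    using mult_right_mono[OF c(1), of "A^2"] mult_right_mono[OF c(2), of "B^2"]
      mult_right_mono[OF c(3), of "P^2"] by (simp add: E_def)
  moreover have "sqnorm k \<le> 9 * (A^2 + B^2 + P^2)"
    using shear_bounds(3)[OF b(5-7)] by (simp add: sqnorm_def k A_def B_def M_def N_def P_def)
  ultimately have "constC V * (sqnorm k / 288) \<le> constC V * E"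
    using constC_pos[OF assms(2)] by (intro mult_left_mono) auto
  moreover have "QL V w k = constC V * E"
    using b by (simp add: QL_def w k E_def A_def B_def M_def N_def P_def field_simps power2_eq_square
        power3_eq_cube)
  ultimately show ?thesis by simp
qed

lemma QL_deriv_coeff_bounds:
  fixes u v A B N P S :: real
  assumes u: "1/2 < u" "u < 2" and v: "1/2 < v" "v < 2"
    and A: "A^2 \<le> 3 * S" and B: "B^2 \<le> 2 * S" and N: "N^2 \<le> S" and P: "P^2 \<le> S"
  shows "\<bar>- (A^2) / u^2 - v^2 * B^2 / u^2 + u * P^2 / v^2\<bar> \<le> 52 * S"
    and "\<bar>2 * v * B^2 / u - u^2 * P^2 / v^3\<bar> \<le> 48 * S"
    and "\<bar>2 * A * N / u\<bar> \<le> 8 * S" and "\<bar>2 * A * P / u\<bar> \<le> 8 * S"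
    and "\<bar>2 * v^2 * B * P / u\<bar> \<le> 24 * S"
proof -
  have S: "S \<ge> 0" using P zero_le_power2[of P] by linarith
  define iu iv where "iu = 1/u" and "iv = 1/v"
  have iu: "0 \<le> iu" "iu \<le> 2" and iv: "0 \<le> iv" "iv \<le> 2"
    using u v by (auto simp: iu_def iv_def field_simps)
  have pow: "iu^2 \<le> 4" "iv^2 \<le> 4" "iv^3 \<le> 8" "u^2 \<le> 4" "v^2 \<le> 4"
    using power_mono[OF iu(2) iu(1), of 2] power_mono[OF iv(2) iv(1), of 2]
      power_mono[OF iv(2) iv(1), of 3] power_mono[of u 2 2] power_mono[of v 2 2] u v by auto
  have prod: "\<bar>a * b\<bar> \<le> (a^2 + b^2) / 2" for a b :: real
    using sum_squares_bound[of "\<bar>a\<bar>" "\<bar>b\<bar>"] by (simp add: abs_mult)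
  have "A^2 * iu^2 \<le> (3 * S) * 4" "v^2 * B^2 * iu^2 \<le> 4 * (2 * S) * 4" "u * P^2 * iv^2 \<le> 2 * S * 4"
    using A B P pow iu iv u S by (intro mult_mono; simp)+
  moreover have "- (A^2) / u^2 - v^2 * B^2 / u^2 + u * P^2 / v^2
      = - (A^2 * iu^2) - v^2 * B^2 * iu^2 + u * P^2 * iv^2"
    by (simp add: iu_def iv_def field_simps)
  moreover have "0 \<le> A^2 * iu^2" "0 \<le> v^2 * B^2 * iu^2" "0 \<le> u * P^2 * iv^2" using u by auto
  ultimately show "\<bar>- (A^2) / u^2 - v^2 * B^2 / u^2 + u * P^2 / v^2\<bar> \<le> 52 * S" by argo
  have "v * B^2 * iu \<le> 2 * (2 * S) * 2" "u^2 * P^2 * iv^3 \<le> 4 * S * 8"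
    using B P pow iu iv v S by (intro mult_mono; simp)+
  moreover have "2 * v * B^2 / u - u^2 * P^2 / v^3 = 2 * (v * B^2 * iu) - u^2 * P^2 * iv^3"
    by (simp add: iu_def iv_def field_simps)
  moreover have "0 \<le> v * B^2 * iu" "0 \<le> u^2 * P^2 * iv^3" using v iu iv by auto
  ultimately show "\<bar>2 * v * B^2 / u - u^2 * P^2 / v^3\<bar> \<le> 48 * S" by argo
  have "\<bar>A * N\<bar> * iu \<le> (2 * S) * 2" "\<bar>A * P\<bar> * iu \<le> (2 * S) * 2"
    "v^2 * \<bar>B * P\<bar> * iu \<le> 4 * (3/2 * S) * 2"
    using prod[of A N] prod[of A P] prod[of B P] A B N P pow iu S by (intro mult_mono; simp)+
  moreover have "\<bar>2 * A * N / u\<bar> = 2 * (\<bar>A * N\<bar> * iu)" "\<bar>2 * A * P / u\<bar> = 2 * (\<bar>A * P\<bar> * iu)"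
    "\<bar>2 * v^2 * B * P / u\<bar> = 2 * (v^2 * \<bar>B * P\<bar> * iu)"
    using iu by (simp_all add: iu_def abs_mult field_simps)
  ultimately show "\<bar>2 * A * N / u\<bar> \<le> 8 * S" "\<bar>2 * A * P / u\<bar> \<le> 8 * S"
    "\<bar>2 * v^2 * B * P / u\<bar> \<le> 24 * S" by argo+
qed

lemma abs_components_le_norm:
  fixes a b c d e :: real
  shows "\<bar>a\<bar> \<le> norm (a, b, c, d, e)" "\<bar>b\<bar> \<le> norm (a, b, c, d, e)" "\<bar>c\<bar> \<le> norm (a, b, c, d, e)"
    "\<bar>d\<bar> \<le> norm (a, b, c, d, e)" "\<bar>e\<bar> \<le> norm (a, b, c, d, e)"
  using norm_fst_le norm_snd_le real_norm_def by (metis order_trans)+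

lemma abs_QL_deriv_le:
  assumes "w \<in> param_box" "V > 0"
  shows "\<bar>QL_deriv V w k h\<bar> \<le> 140 * constC V * sqnorm k * norm h"
proof -
  obtain u v x y z where w: "w = (u, v, x, y, z)" by (cases w)
  obtain m n p where k: "k = (m, n, p)" by (cases k)
  obtain hu hv hx hy hz where h: "h = (hu, hv, hx, hy, hz)" by (cases h)
  note b = param_box_bounds[OF assms(1)[unfolded w]]
  define M N P where "M = real_of_int m" and "N = real_of_int n" and "P = real_of_int p"
  define A B S where "A = M + x*N + y*P" and "B = N + z*P" and "S = sqnorm k"
  have S: "S = M^2 + N^2 + P^2" by (simp add: S_def sqnorm_def k M_def N_def P_def)
  have "A^2 \<le> 3 * S" "B^2 \<le> 2 * S" "N^2 \<le> S" "P^2 \<le> S"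
    using shear_bounds(1,2)[OF b(5-7), where M = M and N = N and P = P] by (auto simp: S A_def B_def)
  note c = QL_deriv_coeff_bounds[OF b(1-4) this]
  have summand_le: "\<bar>t * q\<bar> \<le> norm h * Q" if "\<bar>t\<bar> \<le> norm h" "\<bar>q\<bar> \<le> Q" for t q Q :: real
    unfolding abs_mult using that by (intro mult_mono) auto
  define E where "E = hu * (- (A^2) / u^2 - v^2 * B^2 / u^2 + u * P^2 / v^2)
      + hv * (2 * v * B^2 / u - u^2 * P^2 / v^3)
      + hx * (2 * A * N / u) + hy * (2 * A * P / u) + hz * (2 * v^2 * B * P / u)"
  have hb: "\<bar>hu\<bar> \<le> norm h" "\<bar>hv\<bar> \<le> norm h" "\<bar>hx\<bar> \<le> norm h" "\<bar>hy\<bar> \<le> norm h" "\<bar>hz\<bar> \<le> norm h"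
    using abs_components_le_norm[where a = hu and b = hv and c = hx and d = hy and e = hz]
    by (simp_all add: h)
  have "\<bar>E\<bar> \<le> norm h * (52 * S) + norm h * (48 * S) + norm h * (8 * S) + norm h * (8 * S)
      + norm h * (24 * S)"
    unfolding E_def using summand_le[OF hb(1) c(1)] summand_le[OF hb(2) c(2)]
      summand_le[OF hb(3) c(3)] summand_le[OF hb(4) c(4)] summand_le[OF hb(5) c(5)] by argo
  moreover have "QL_deriv V w k h = constC V * E"
    by (simp add: QL_deriv_def w k h E_def Let_def A_def B_def M_def N_def P_def)
  ultimately have "\<bar>QL_deriv V w k h\<bar> \<le> constC V * (140 * S * norm h)"
    using constC_pos[OF assms(2)] by (simp add: abs_mult mult_left_mono algebra_simps)
  then show ?thesis by (simp add: S_def mult_ac)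
qed

section \<open>Differentiability of the energy\<close>

lemma bigo_powr_imp_bound:
  fixes g :: "real \<Rightarrow> real"
  assumes q: "q > 0" and cont: "continuous_on {q..} g"
    and bigo: "g \<in> O(\<lambda>r. r powr a)" and a: "a \<le> 0"
  obtains M where "\<And>r. r \<ge> q \<Longrightarrow> \<bar>g r\<bar> \<le> M * r powr a"
proof -
  obtain c where c: "c > 0" "eventually (\<lambda>r. norm (g r) \<le> c * norm (r powr a)) at_top"
    using landau_o.bigE[OF bigo] by blast
  then obtain R0 where R0: "\<And>r. r \<ge> R0 \<Longrightarrow> \<bar>g r\<bar> \<le> c * r powr a"
    unfolding eventually_at_top_linorder by auto
  define R where "R = max R0 q"
  have "compact (g ` {q..R})"
    by (rule compact_continuous_image) (use cont in \<open>auto intro: continuous_on_subset\<close>)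
  then obtain K where K: "\<And>r. r \<in> {q..R} \<Longrightarrow> \<bar>g r\<bar> \<le> K"
    using compact_imp_bounded bounded_iff by (metis image_eqI real_norm_def)
  have RA: "R powr a > 0" using q by (simp add: R_def)
  define M where "M = max c (max K 0 / R powr a)"
  show ?thesis
  proof (rule that[of M])
    fix r assume r: "r \<ge> q"
    have "M \<ge> c" "max K 0 / R powr a \<le> M" by (simp_all add: M_def)
    then have "M * R powr a \<ge> max K 0" using RA by (simp add: divide_le_eq)
    show "\<bar>g r\<bar> \<le> M * r powr a"
    proof (cases "r \<ge> R0")
      case True
      have "c * r powr a \<le> M * r powr a" using \<open>M \<ge> c\<close> by (intro mult_right_mono) auto
      with R0[OF True] show ?thesis by linarith
    next
      case False
      then have "r \<in> {q..R}" using r by (auto simp: R_def)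
      have "M * R powr a \<le> M * r powr a"
        using \<open>r \<in> {q..R}\<close> q a c by (intro mult_left_mono powr_mono2') (auto simp: M_def)
      with K[OF \<open>r \<in> {q..R}\<close>] \<open>M * R powr a \<ge> max K 0\<close> show ?thesis by linarith
    qed
  qed
qed

lemma class_F_decay:
  assumes "class_F f" "q > 0"
  obtains f1 \<eta>0 \<eta>1 M0 M1 where "\<And>r. r > 0 \<Longrightarrow> (f has_real_derivative f1 r) (at r)"
    and "\<eta>0 > 0" "\<And>r. r \<ge> q \<Longrightarrow> \<bar>f r\<bar> \<le> M0 * r powr (-3/2 - \<eta>0)"
    and "\<eta>1 > 0" "\<And>r. r \<ge> q \<Longrightarrow> \<bar>f1 r\<bar> \<le> M1 * r powr (-5/2 - \<eta>1)"
proof -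
  obtain f1 f2 \<eta>0 \<eta>1 where f1: "\<And>r. r > 0 \<Longrightarrow> (f has_real_derivative f1 r) (at r)"
    and f2: "\<And>r. r > 0 \<Longrightarrow> (f1 has_real_derivative f2 r) (at r)"
    and \<eta>: "\<eta>0 > 0" "\<eta>1 > 0"
    and bigo: "f \<in> O(\<lambda>r. r powr (-3/2 - \<eta>0))" "f1 \<in> O(\<lambda>r. r powr (-5/2 - \<eta>1))"
    using assms(1) unfolding class_F_def by (auto simp: algebra_simps)
  have "isCont f r" "isCont f1 r" if "r \<ge> q" for r
    using DERIV_isCont[OF f1] DERIV_isCont[OF f2] that assms(2) by auto
  then have "continuous_on {q..} f" "continuous_on {q..} f1"
    by (auto intro!: continuous_at_imp_continuous_on)
  moreover have "-3/2 - \<eta>0 \<le> 0" "-5/2 - \<eta>1 \<le> 0" using \<eta> by simp_all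
  ultimately obtain M0 M1 where M:
    "\<And>r. r \<ge> q \<Longrightarrow> \<bar>f r\<bar> \<le> M0 * r powr (-3/2 - \<eta>0)"
    "\<And>r. r \<ge> q \<Longrightarrow> \<bar>f1 r\<bar> \<le> M1 * r powr (-5/2 - \<eta>1)"
    using bigo_powr_imp_bound[OF assms(2)] bigo by metis
  show ?thesis by (rule that[OF f1 \<eta>(1) M(1) \<eta>(2) M(2)])
qed

lemma abs_le_sqnorm_powr:
  fixes g :: "real \<Rightarrow> real"
  assumes bound: "\<And>r. r \<ge> q \<Longrightarrow> \<bar>g r\<bar> \<le> M * r powr a"
    and "a \<le> 0" "q > 0" "k \<in> nonzero_points" "q * sqnorm k \<le> Q"
  shows "\<bar>g Q\<bar> \<le> M * q powr a * sqnorm k powr a"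
proof -
  have N: "sqnorm k \<ge> 1" using sqnorm_ge_1[OF assms(4)] .
  have "0 \<le> M * q powr a" using bound[of q] by (smt (verit))
  then have M: "M \<ge> 0" using assms(3) by (simp add: zero_le_mult_iff)
  have "q \<le> Q" using assms(3,5) N by (smt (verit) mult_le_cancel_left1)
  then have "\<bar>g Q\<bar> \<le> M * Q powr a" by (rule bound)
  also have "\<dots> \<le> M * (q * sqnorm k) powr a"
    using assms N M by (intro mult_left_mono powr_mono2') auto
  also have "\<dots> = M * q powr a * sqnorm k powr a"
    using assms(3) N by (simp add: powr_mult)
  finally show ?thesis .
qed

lemma class_F_dominated_on_param_box:
  assumes "class_F f" "V > 0"
  obtains f1 G0 G1 where "\<And>r. r > 0 \<Longrightarrow> (f has_real_derivative f1 r) (at r)"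
    and "G0 summable_on nonzero_points" "G1 summable_on nonzero_points"
    and "\<And>w k. w \<in> param_box \<Longrightarrow> k \<in> nonzero_points \<Longrightarrow> \<bar>f (QL V w k)\<bar> \<le> G0 k"
    and "\<And>w k. w \<in> param_box \<Longrightarrow> k \<in> nonzero_points \<Longrightarrow> \<bar>f1 (QL V w k) * sqnorm k\<bar> \<le> G1 k"
proof -
  define q where "q = constC V / 288"
  have q: "q > 0" using constC_pos[OF assms(2)] by (simp add: q_def)
  obtain f1 \<eta>0 \<eta>1 M0 M1 where f1: "\<And>r. r > 0 \<Longrightarrow> (f has_real_derivative f1 r) (at r)"
    and \<eta>: "\<eta>0 > 0" "\<eta>1 > 0"
    and M: "\<And>r. r \<ge> q \<Longrightarrow> \<bar>f r\<bar> \<le> M0 * r powr (-3/2 - \<eta>0)"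
      "\<And>r. r \<ge> q \<Longrightarrow> \<bar>f1 r\<bar> \<le> M1 * r powr (-5/2 - \<eta>1)"
    using class_F_decay[OF assms(1) q] by metis
  have QL_ge: "q * sqnorm k \<le> QL V w k" if "w \<in> param_box" for w k
    using QL_ge_sqnorm[OF that assms(2)] by (simp add: q_def)
  define G0 where "G0 k = M0 * q powr (-3/2 - \<eta>0) * sqnorm k powr (-3/2 - \<eta>0)" for k
  define G1 where "G1 k = M1 * q powr (-5/2 - \<eta>1) * sqnorm k powr (-3/2 - \<eta>1)" for k
  have "(\<lambda>k. sqnorm k powr (-3/2 - \<eta>0)) summable_on nonzero_points"
    "(\<lambda>k. sqnorm k powr (-3/2 - \<eta>1)) summable_on nonzero_points"
    using summable_on_sqnorm_powr[of "3/2 + \<eta>0"] summable_on_sqnorm_powr[of "3/2 + \<eta>1"] \<eta>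
    by simp_all
  then have G: "G0 summable_on nonzero_points" "G1 summable_on nonzero_points"
    unfolding G0_def G1_def by (auto intro!: summable_on_cmult_right)
  have f_le: "\<bar>f (QL V w k)\<bar> \<le> G0 k" if "w \<in> param_box" "k \<in> nonzero_points" for w k
    using abs_le_sqnorm_powr[OF M(1) _ q that(2) QL_ge[OF that(1)]] \<eta> by (simp add: G0_def)
  have f1_le: "\<bar>f1 (QL V w k) * sqnorm k\<bar> \<le> G1 k" if "w \<in> param_box" "k \<in> nonzero_points" for w k
  proof -
    have N: "sqnorm k \<ge> 1" using sqnorm_ge_1[OF that(2)] .
    have "\<bar>f1 (QL V w k)\<bar> * sqnorm k \<le> M1 * q powr (-5/2 - \<eta>1) * sqnorm k powr (-5/2 - \<eta>1) * sqnorm k"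
      using abs_le_sqnorm_powr[OF M(2) _ q that(2) QL_ge[OF that(1)]] \<eta> N
      by (intro mult_right_mono) auto
    also have "\<dots> = G1 k"
    proof -
      have "sqnorm k powr (-5/2 - \<eta>1) * sqnorm k = sqnorm k powr (1 + (-5/2 - \<eta>1))"
        using N powr_mult_base[of "sqnorm k" "-5/2 - \<eta>1"] by (simp add: mult.commute)
      then show ?thesis by (simp add: G1_def)
    qed
    finally show ?thesis using N by (simp add: abs_mult)
  qed
  show ?thesis by (rule that[OF f1 G f_le f1_le])
qed

lemma Ef_has_derivative:
  assumes "class_F f" "V > 0"
  obtains f1 where
    "\<And>w. w \<in> param_box \<Longrightarrow>
      (Ef f V has_derivative (\<lambda>h. \<Sum>\<^sub>\<infinity>k\<in>nonzero_points. f1 (QL V w k) * QL_deriv V w k h)) (at w)"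
    and "\<And>w. w \<in> param_box \<Longrightarrow> (\<lambda>k. f1 (QL V w k) * sqnorm k) summable_on nonzero_points"
proof -
  obtain f1 G0 G1 where f1: "\<And>r. r > 0 \<Longrightarrow> (f has_real_derivative f1 r) (at r)"
    and G: "G0 summable_on nonzero_points" "G1 summable_on nonzero_points"
    and f_le: "\<And>w k. w \<in> param_box \<Longrightarrow> k \<in> nonzero_points \<Longrightarrow> \<bar>f (QL V w k)\<bar> \<le> G0 k"
    and f1_le: "\<And>w k. w \<in> param_box \<Longrightarrow> k \<in> nonzero_points \<Longrightarrow> \<bar>f1 (QL V w k) * sqnorm k\<bar> \<le> G1 k"
    by (rule class_F_dominated_on_param_box[OF assms]) blast
  have C: "constC V > 0" using constC_pos[OF assms(2)] .
  show ?thesis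
  proof (rule that)
    show "(\<lambda>k. f1 (QL V w k) * sqnorm k) summable_on nonzero_points" if "w \<in> param_box" for w
      using f1_le[OF that] by (intro summable_on_dominated[OF G(2)])
  next
    fix w0 assume "w0 \<in> param_box"
    show "(Ef f V has_derivative (\<lambda>h. \<Sum>\<^sub>\<infinity>k\<in>nonzero_points. f1 (QL V w0 k) * QL_deriv V w0 k h)) (at w0)"
      unfolding Ef_def[abs_def]
    proof (rule has_derivative_infsum[where B = "\<lambda>k. 140 * constC V * G1 k"])
      show "open param_box" "convex param_box" "w0 \<in> param_box"
        by (fact open_param_box convex_param_box \<open>w0 \<in> param_box\<close>)+
      show "(\<lambda>k. 140 * constC V * G1 k) summable_on nonzero_points"
        using G(2) by (rule summable_on_cmult_right)
      show "(\<lambda>k. f (QL V w k)) summable_on nonzero_points" if "w \<in> param_box" for w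
        using f_le[OF that] by (intro summable_on_dominated[OF G(1)])
      fix k w assume k: "k \<in> nonzero_points" and w: "w \<in> param_box"
      have "0 < constC V / 288 * sqnorm k" using C sqnorm_ge_1[OF k] by simp
      then have "QL V w k > 0" using QL_ge_sqnorm[OF w assms(2), of k] by linarith
      then have "(f has_derivative (*) (f1 (QL V w k))) (at (QL V w k))"
        using f1 by (simp add: has_field_derivative_imp_has_derivative)
      moreover have "fst w \<noteq> 0" "fst (snd w) \<noteq> 0" using w by (auto simp: param_box_def)
      ultimately show "((\<lambda>w. f (QL V w k)) has_derivative (\<lambda>h. f1 (QL V w k) * QL_deriv V w k h)) (at w)"
        using has_derivative_compose[OF QL_has_derivative] by blast
      fix h
      have "\<bar>f1 (QL V w k) * QL_deriv V w k h\<bar> \<le> \<bar>f1 (QL V w k)\<bar> * (140 * constC V * sqnorm k * norm h)"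
        unfolding abs_mult by (intro mult_left_mono abs_QL_deriv_le w assms(2)) simp
      also have "\<dots> = 140 * constC V * norm h * \<bar>f1 (QL V w k) * sqnorm k\<bar>"
        using sqnorm_nonneg[of k] by (simp add: abs_mult mult_ac)
      also have "\<dots> \<le> 140 * constC V * norm h * G1 k"
        using C by (intro mult_left_mono f1_le w k) simp
      finally show "\<bar>f1 (QL V w k) * QL_deriv V w k h\<bar> \<le> 140 * constC V * G1 k * norm h"
        by (simp add: mult_ac)
    qed
  qed
qed

section \<open>Lattices with the symmetry of the cube are critical\<close>

text \<open>The four maps below generate the symmetry group of the cube (all signed permutations).\<close>

definition cube_symmetric :: "(int \<times> int \<times> int) set \<Rightarrow> bool" where
  "cube_symmetric \<Lambda> \<longleftrightarrow> (\<forall>a b c. (a, b, c) \<in> \<Lambda> \<longrightarrow>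
     (b, a, c) \<in> \<Lambda> \<and> (a, c, b) \<in> \<Lambda> \<and> (-a, b, c) \<in> \<Lambda> \<and> (a, -b, c) \<in> \<Lambda>)"

lemma infsum_radial_reflect:
  assumes "\<And>t. t \<in> \<Lambda> \<Longrightarrow> \<sigma> t \<in> \<Lambda>" "\<And>t. \<sigma> (\<sigma> t) = t" "\<And>t. sqnorm (\<sigma> t) = sqnorm t"
  shows "(\<Sum>\<^sub>\<infinity>t\<in>\<Lambda>. g (sqnorm t) * \<phi> (\<sigma> t)) = (\<Sum>\<^sub>\<infinity>t\<in>\<Lambda>. g (sqnorm t) * \<phi> t)"
proof -
  have "(\<Sum>\<^sub>\<infinity>t\<in>\<Lambda>. g (sqnorm t) * \<phi> (\<sigma> t)) = (\<Sum>\<^sub>\<infinity>t\<in>\<Lambda>. (\<lambda>t. g (sqnorm t) * \<phi> t) (\<sigma> t))"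
    using assms(3) by simp
  also have "\<dots> = (\<Sum>\<^sub>\<infinity>t\<in>\<Lambda>. g (sqnorm t) * \<phi> t)"
    by (rule infsum_reindex_bij_witness[of \<Lambda> \<sigma> \<sigma> \<Lambda>]) (use assms(1,2) in auto)
  finally show ?thesis .
qed

lemma infsum_cube_symmetric_moments:
  fixes \<Lambda> :: "(int \<times> int \<times> int) set" and g :: "real \<Rightarrow> real"
  assumes sym: "cube_symmetric \<Lambda>"
  defines "S \<equiv> \<lambda>\<phi>. \<Sum>\<^sub>\<infinity>t\<in>\<Lambda>. g (sqnorm t) * \<phi> t"
  shows "S (\<lambda>(a, b, c). of_int b ^ 2) = S (\<lambda>(a, b, c). of_int a ^ 2)"
    and "S (\<lambda>(a, b, c). of_int c ^ 2) = S (\<lambda>(a, b, c). of_int b ^ 2)"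
    and "S (\<lambda>(a, b, c). of_int a * of_int b) = 0"
    and "S (\<lambda>(a, b, c). of_int a * of_int c) = 0"
    and "S (\<lambda>(a, b, c). of_int b * of_int c) = 0"
proof -
  define swap12 swap23 neg1 neg2 :: "int \<times> int \<times> int \<Rightarrow> int \<times> int \<times> int"
    where "swap12 = (\<lambda>(a, b, c). (b, a, c))" and "swap23 = (\<lambda>(a, b, c). (a, c, b))"
      and "neg1 = (\<lambda>(a, b, c). (-a, b, c))" and "neg2 = (\<lambda>(a, b, c). (a, -b, c))"
  have reflect: "S (\<lambda>t. \<phi> (\<sigma> t)) = S \<phi>" if "\<sigma> \<in> {swap12, swap23, neg1, neg2}" for \<phi> \<sigma>
    unfolding S_def
  proof (rule infsum_radial_reflect)
    fix t :: "int \<times> int \<times> int"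
    obtain a b c where t: "t = (a, b, c)" by (cases t)
    from that show "t \<in> \<Lambda> \<Longrightarrow> \<sigma> t \<in> \<Lambda>"
      using sym[unfolded cube_symmetric_def, rule_format, of a b c]
      by (auto simp: t swap12_def swap23_def neg1_def neg2_def)
    from that show "\<sigma> (\<sigma> t) = t" "sqnorm (\<sigma> t) = sqnorm t"
      by (auto simp: t swap12_def swap23_def neg1_def neg2_def sqnorm_def)
  qed
  have odd: "S \<phi> = 0" if "S (\<lambda>t. - \<phi> t) = S \<phi>" for \<phi>
    using that unfolding S_def by (simp add: infsum_uminus)
  show "S (\<lambda>(a, b, c). of_int b ^ 2) = S (\<lambda>(a, b, c). of_int a ^ 2)"
    using reflect[of swap12 "\<lambda>(a, b, c). of_int a ^ 2"] by (simp add: swap12_def case_prod_unfold)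
  show "S (\<lambda>(a, b, c). of_int c ^ 2) = S (\<lambda>(a, b, c). of_int b ^ 2)"
    using reflect[of swap23 "\<lambda>(a, b, c). of_int b ^ 2"] by (simp add: swap23_def case_prod_unfold)
  show "S (\<lambda>(a, b, c). of_int a * of_int b) = 0"
    using reflect[of neg1 "\<lambda>(a, b, c). of_int a * of_int b"]
    by (intro odd) (simp add: neg1_def case_prod_unfold)
  show "S (\<lambda>(a, b, c). of_int a * of_int c) = 0"
    using reflect[of neg1 "\<lambda>(a, b, c). of_int a * of_int c"]
    by (intro odd) (simp add: neg1_def case_prod_unfold)
  show "S (\<lambda>(a, b, c). of_int b * of_int c) = 0"
    using reflect[of neg2 "\<lambda>(a, b, c). of_int b * of_int c"]
    by (intro odd) (simp add: neg2_def case_prod_unfold)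
qed

lemma quadratic_monomials_le_sqnorm:
  fixes a b c :: int
  shows "of_int a ^ 2 \<le> sqnorm (a, b, c)" "of_int b ^ 2 \<le> sqnorm (a, b, c)" "of_int c ^ 2 \<le> sqnorm (a, b, c)"
    and "\<bar>of_int a * of_int b\<bar> \<le> sqnorm (a, b, c)" "\<bar>of_int a * of_int c\<bar> \<le> sqnorm (a, b, c)"
    "\<bar>of_int b * of_int c\<bar> \<le> sqnorm (a, b, c)"
proof -
  have prod: "\<bar>r * s\<bar> \<le> r^2 + s^2" for r s :: real
  proof -
    have "2 * \<bar>r\<bar> * \<bar>s\<bar> \<le> r^2 + s^2" using sum_squares_bound[of "\<bar>r\<bar>" "\<bar>s\<bar>"] by simp
    moreover have "0 \<le> \<bar>r\<bar> * \<bar>s\<bar>" by simp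
    ultimately show ?thesis unfolding abs_mult by linarith
  qed
  define r s w where "r = real_of_int a" and "s = real_of_int b" and "w = real_of_int c"
  have "sqnorm (a, b, c) = r^2 + s^2 + w^2" by (simp add: sqnorm_def r_def s_def w_def)
  then show "of_int a ^ 2 \<le> sqnorm (a, b, c)" "of_int b ^ 2 \<le> sqnorm (a, b, c)" "of_int c ^ 2 \<le> sqnorm (a, b, c)"
    "\<bar>of_int a * of_int b\<bar> \<le> sqnorm (a, b, c)" "\<bar>of_int a * of_int c\<bar> \<le> sqnorm (a, b, c)"
    "\<bar>of_int b * of_int c\<bar> \<le> sqnorm (a, b, c)"
    using prod[of r s] prod[of r w] prod[of s w] zero_le_power2[of r] zero_le_power2[of s]
      zero_le_power2[of w] unfolding r_def s_def w_def by linarith+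
qed

lemma infsum_cube_symmetric_traceless_eq_0:
  fixes \<Lambda> :: "(int \<times> int \<times> int) set" and g :: "real \<Rightarrow> real"
  assumes sym: "cube_symmetric \<Lambda>"
    and sum: "(\<lambda>t. g (sqnorm t) * sqnorm t) summable_on \<Lambda>"
    and trace: "cxx + cyy + czz = 0"
  shows "(\<Sum>\<^sub>\<infinity>t\<in>\<Lambda>. g (sqnorm t) * (case t of (a, b, c) \<Rightarrow>
      cxx * of_int a ^ 2 + cyy * of_int b ^ 2 + czz * of_int c ^ 2
      + cxy * (of_int a * of_int b) + cxz * (of_int a * of_int c) + cyz * (of_int b * of_int c))) = 0"
proof -
  define S where "S \<phi> = (\<Sum>\<^sub>\<infinity>t\<in>\<Lambda>. g (sqnorm t) * \<phi> t)" for \<phi> :: "int \<times> int \<times> int \<Rightarrow> real"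
  define X Y Z :: "int \<times> int \<times> int \<Rightarrow> real"
    where "X = (\<lambda>(a, b, c). of_int a ^ 2)" and "Y = (\<lambda>(a, b, c). of_int b ^ 2)"
      and "Z = (\<lambda>(a, b, c). of_int c ^ 2)"
  define XY XZ YZ :: "int \<times> int \<times> int \<Rightarrow> real"
    where "XY = (\<lambda>(a, b, c). of_int a * of_int b)" and "XZ = (\<lambda>(a, b, c). of_int a * of_int c)"
      and "YZ = (\<lambda>(a, b, c). of_int b * of_int c)"
  have abs_sum: "(\<lambda>t. \<bar>g (sqnorm t) * sqnorm t\<bar>) summable_on \<Lambda>"
    using sum by (subst (asm) summable_on_iff_abs_summable_on_real) simp
  have "((\<lambda>t. g (sqnorm t) * \<phi> t) has_sum S \<phi>) \<Lambda>" if "\<phi> \<in> {X, Y, Z, XY, XZ, YZ}" for \<phi>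
    unfolding S_def
  proof (rule has_sum_infsum, rule summable_on_dominated[OF abs_sum])
    fix t :: "int \<times> int \<times> int"
    obtain a b c where t: "t = (a, b, c)" by (cases t)
    have "\<bar>\<phi> t\<bar> \<le> sqnorm t"
      using that quadratic_monomials_le_sqnorm[where a = a and b = b and c = c]
      by (auto simp: t X_def Y_def Z_def XY_def XZ_def YZ_def)
    then show "\<bar>g (sqnorm t) * \<phi> t\<bar> \<le> \<bar>g (sqnorm t) * sqnorm t\<bar>"
      using sqnorm_nonneg[of t] by (simp add: abs_mult mult_left_mono)
  qed
  then have "((\<lambda>t. cxx * (g (sqnorm t) * X t) + cyy * (g (sqnorm t) * Y t) + czz * (g (sqnorm t) * Z t)
      + cxy * (g (sqnorm t) * XY t) + cxz * (g (sqnorm t) * XZ t) + cyz * (g (sqnorm t) * YZ t))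
      has_sum (cxx * S X + cyy * S Y + czz * S Z + cxy * S XY + cxz * S XZ + cyz * S YZ)) \<Lambda>"
    by (intro has_sum_add has_sum_cmult_right) auto
  moreover have "S Y = S X" "S Z = S Y" "S XY = 0" "S XZ = 0" "S YZ = 0"
    using infsum_cube_symmetric_moments[OF sym, of g]
    unfolding S_def[abs_def] X_def Y_def Z_def XY_def XZ_def YZ_def by simp_all
  ultimately have "((\<lambda>t. g (sqnorm t) * (case t of (a, b, c) \<Rightarrow>
      cxx * of_int a ^ 2 + cyy * of_int b ^ 2 + czz * of_int c ^ 2
      + cxy * (of_int a * of_int b) + cxz * (of_int a * of_int c) + cyz * (of_int b * of_int c)))
      has_sum ((cxx + cyy + czz) * S X)) \<Lambda>"
    by (simp add: X_def Y_def Z_def XY_def XZ_def YZ_def case_prod_unfold distrib_left distrib_right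
        mult.left_commute)
  then show ?thesis using trace by (simp add: infsumI)
qed

lemma cube_symmetric_image_nonzero_points:
  assumes "inj T" "T (0, 0, 0) = (0, 0, 0)" "cube_symmetric (range T)"
  shows "cube_symmetric (T ` nonzero_points)"
proof -
  have "T ` nonzero_points = range T - {(0, 0, 0)}"
    using assms(1,2) by (simp add: image_set_diff)
  then show ?thesis
    unfolding cube_symmetric_def
  proof (intro allI impI)
    fix a b c assume "(a, b, c) \<in> T ` nonzero_points"
    with \<open>T ` nonzero_points = range T - {(0, 0, 0)}\<close>
    have "(a, b, c) \<in> range T" "(a, b, c) \<noteq> (0, 0, 0)" by auto
    with assms(3)[unfolded cube_symmetric_def, rule_format, of a b c]
    show "(b, a, c) \<in> T ` nonzero_points \<and> (a, c, b) \<in> T ` nonzero_points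
      \<and> (- a, b, c) \<in> T ` nonzero_points \<and> (a, - b, c) \<in> T ` nonzero_points"
      using \<open>T ` nonzero_points = range T - {(0, 0, 0)}\<close> by auto
  qed
qed

lemma Ef_critical_if_cube_symmetric:
  fixes T :: "int \<times> int \<times> int \<Rightarrow> int \<times> int \<times> int"
    and cxx cyy czz cxy cxz cyz :: "real \<times> real \<times> real \<times> real \<times> real \<Rightarrow> real"
  assumes "class_F f" "V > 0" "w0 \<in> param_box"
    and lattice: "inj T" "T (0, 0, 0) = (0, 0, 0)" "cube_symmetric (range T)"
    and QL: "\<And>k. QL V w0 k = \<kappa> * sqnorm (T k)"
    and deriv: "\<And>h k. QL_deriv V w0 k h = (case T k of (a, b, c) \<Rightarrow>
      cxx h * of_int a ^ 2 + cyy h * of_int b ^ 2 + czz h * of_int c ^ 2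
      + cxy h * (of_int a * of_int b) + cxz h * (of_int a * of_int c) + cyz h * (of_int b * of_int c))"
    and trace: "\<And>h. cxx h + cyy h + czz h = 0"
    and bound: "\<And>k. sqnorm (T k) \<le> K * sqnorm k"
  shows "(Ef f V has_derivative (\<lambda>_. 0)) (at w0)"
proof -
  obtain f1 where D: "\<And>w. w \<in> param_box \<Longrightarrow> (Ef f V has_derivative
      (\<lambda>h. \<Sum>\<^sub>\<infinity>k\<in>nonzero_points. f1 (QL V w k) * QL_deriv V w k h)) (at w)"
    and sum: "\<And>w. w \<in> param_box \<Longrightarrow> (\<lambda>k. f1 (QL V w k) * sqnorm k) summable_on nonzero_points"
    by (rule Ef_has_derivative[OF assms(1,2)]) blast
  have inj: "inj_on T nonzero_points" using lattice(1) by (rule inj_on_subset) simp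
  note sym = cube_symmetric_image_nonzero_points[OF lattice]
  define g where "g s = f1 (\<kappa> * s)" for s
  have K: "K \<ge> 0"
    using bound[of "(1, 0, 0)"] sqnorm_nonneg[of "T (1, 0, 0)"] by (simp add: sqnorm_def)
  have "(\<lambda>t. g (sqnorm t) * sqnorm t) summable_on T ` nonzero_points"
    unfolding summable_on_reindex[OF inj] o_def
  proof (rule summable_on_dominated)
    show "(\<lambda>k. K * \<bar>f1 (QL V w0 k) * sqnorm k\<bar>) summable_on nonzero_points"
    proof -
      have "(\<lambda>k. norm (f1 (QL V w0 k) * sqnorm k)) summable_on nonzero_points"
        using summable_on_iff_abs_summable_on_real[THEN iffD1, OF sum[OF assms(3)]] .
      from summable_on_cmult_right[OF this, of K] show ?thesis by simp
    qed
    fix k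
    have "\<bar>g (sqnorm (T k)) * sqnorm (T k)\<bar> = \<bar>f1 (QL V w0 k)\<bar> * sqnorm (T k)"
      using sqnorm_nonneg[of "T k"] by (simp add: g_def QL abs_mult)
    also have "\<dots> \<le> \<bar>f1 (QL V w0 k)\<bar> * (K * sqnorm k)" by (intro mult_left_mono bound) simp
    also have "\<dots> = K * \<bar>f1 (QL V w0 k) * sqnorm k\<bar>" using sqnorm_nonneg[of k] by (simp add: abs_mult)
    finally show "\<bar>g (sqnorm (T k)) * sqnorm (T k)\<bar> \<le> K * \<bar>f1 (QL V w0 k) * sqnorm k\<bar>" .
  qed
  then have "(\<Sum>\<^sub>\<infinity>t\<in>T ` nonzero_points. g (sqnorm t) * (case t of (a, b, c) \<Rightarrow>
      cxx h * of_int a ^ 2 + cyy h * of_int b ^ 2 + czz h * of_int c ^ 2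
      + cxy h * (of_int a * of_int b) + cxz h * (of_int a * of_int c) + cyz h * (of_int b * of_int c))) = 0"
    for h by (rule infsum_cube_symmetric_traceless_eq_0[OF sym _ trace])
  then have "(\<Sum>\<^sub>\<infinity>k\<in>nonzero_points. f1 (QL V w0 k) * QL_deriv V w0 k h) = 0" for h
    by (simp add: infsum_reindex[OF inj] o_def g_def QL deriv)
  with D[OF assms(3)] show ?thesis by simp
qed

lemma sqnorm_linear_le:
  fixes a b c d e f g h i m n p :: int
  shows "sqnorm (a*m + b*n + c*p, d*m + e*n + f*p, g*m + h*n + i*p)
    \<le> of_int (a^2 + b^2 + c^2 + d^2 + e^2 + f^2 + g^2 + h^2 + i^2) * sqnorm (m, n, p)"
proof -
  have row: "of_int (r*m + s*n + t*p) ^ 2 \<le> of_int (r^2 + s^2 + t^2) * sqnorm (m, n, p)"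
    for r s t :: int
    using cauchy_schwarz3[of "of_int r" "of_int m" "of_int s" "of_int n" "of_int t" "of_int p"]
    by simp
  show ?thesis
    using row[of a b c] row[of d e f] row[of g h i]
    by (simp only: sqnorm_triple of_int_add distrib_right)
qed

lemma FCC_critical:
  assumes "class_F f" "V > 0"
  shows "(Ef f V has_derivative (\<lambda>_. 0)) (at FCC_params)"
proof -
  define T :: "int \<times> int \<times> int \<Rightarrow> int \<times> int \<times> int" where "T = (\<lambda>(m, n, p). (m + n + p, m - n, p))"
  define cxx cyy czz cxy cxz cyz :: "real \<times> real \<times> real \<times> real \<times> real \<Rightarrow> real"
    where "cxx = (\<lambda>(hu, hv, hx, hy, hz). constC V * (- hu/2 + hv/2 + hx/2))"
      and "cyy = (\<lambda>(hu, hv, hx, hy, hz). constC V * (- hu/2 + hv/2 - hx/2))"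
      and "czz = (\<lambda>(hu, hv, hx, hy, hz). constC V * (hu - hv))"
      and "cxy = (\<lambda>(hu, hv, hx, hy, hz). constC V * (- hv))"
      and "cxz = (\<lambda>(hu, hv, hx, hy, hz). constC V * (- hx/2 + hy + hz))"
      and "cyz = (\<lambda>(hu, hv, hx, hy, hz). constC V * (- hx/2 + hy - hz))"
  have "range T = {(a, b, c). even (a + b + c)}"
  proof (intro set_eqI iffI)
    fix t :: "int \<times> int \<times> int" assume "t \<in> {(a, b, c). even (a + b + c)}"
    then obtain a b c where t: "t = (a, b, c)" "even (a + b + c)" by auto
    then have "even (a + b - c)" by presburger
    then obtain j where "a + b - c = 2 * j" ..
    then show "t \<in> range T" using t by (auto simp: T_def intro!: image_eqI[where x = "(j, j - b, c)"])
  qed (auto simp: T_def)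
  then have sym: "cube_symmetric (range T)" by (simp add: cube_symmetric_def) presburger
  show ?thesis
  proof (rule Ef_critical_if_cube_symmetric[OF assms _ _ _ sym, where \<kappa> = "constC V / 2"
      and K = 6 and cxx = cxx and cyy = cyy and czz = czz and cxy = cxy and cxz = cxz and cyz = cyz])
    show "FCC_params \<in> param_box" by (simp add: FCC_params_def param_box_def)
    show "inj T" "T (0, 0, 0) = (0, 0, 0)" by (auto simp: T_def inj_def)
    show "QL V FCC_params k = constC V / 2 * sqnorm (T k)" for k
      by (cases k) (simp add: QL_def FCC_params_def T_def power2_eq_square algebra_simps)
    show "QL_deriv V FCC_params k h = (case T k of (a, b, c) \<Rightarrow>
      cxx h * of_int a ^ 2 + cyy h * of_int b ^ 2 + czz h * of_int c ^ 2
      + cxy h * (of_int a * of_int b) + cxz h * (of_int a * of_int c) + cyz h * (of_int b * of_int c))"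
      for h k
      by (cases k; cases h) (simp add: QL_deriv_def FCC_params_def T_def cxx_def cyy_def czz_def
          cxy_def cxz_def cyz_def Let_def power2_eq_square algebra_simps divide_simps)
    show "sqnorm (T k) \<le> 6 * sqnorm k" for k
      using sqnorm_linear_le[where a = 1 and b = 1 and c = 1 and d = 1 and e = "-1" and f = 0
          and g = 0 and h = 0 and i = 1 and m = "fst k" and n = "fst (snd k)" and p = "snd (snd k)"]
      by (cases k) (simp add: T_def)
    show "cxx h + cyy h + czz h = 0" for h
      by (cases h) (simp add: cxx_def cyy_def czz_def algebra_simps)
  qed
qed

lemma cube_of_2_powr: "(2 powr a) ^ 3 = 2 powr (3 * a :: real)"
  by (simp add: powr_power)

lemma BCC_critical:
  assumes "class_F f" "V > 0"
  shows "(Ef f V has_derivative (\<lambda>_. 0)) (at BCC_params)"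
proof -
  define u0 :: real where "u0 = 2 powr (-1/3)"
  have u0: "u0 > 0" "u0^3 = 1/2"
    unfolding u0_def cube_of_2_powr by (simp_all add: powr_minus)
  have "2 powr (-1) < u0" "u0 < 2 powr 1" unfolding u0_def by (subst powr_less_cancel_iff; simp)+
  then have box: "(u0, 1, 0, 1/2, 1/2) \<in> param_box" by (simp add: param_box_def powr_minus)
  define T :: "int \<times> int \<times> int \<Rightarrow> int \<times> int \<times> int" where "T = (\<lambda>(m, n, p). (2 * m + p, 2 * n + p, p))"
  define cxx cyy czz cxy cxz cyz :: "real \<times> real \<times> real \<times> real \<times> real \<Rightarrow> real"
    where "cxx = (\<lambda>(hu, hv, hx, hy, hz). constC V * (- hu / (4 * u0^2)))"
      and "cyy = (\<lambda>(hu, hv, hx, hy, hz). constC V * (- hu / (4 * u0^2) + hv / (2 * u0)))"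
      and "czz = (\<lambda>(hu, hv, hx, hy, hz). constC V * (hu * u0 - hv * u0^2))"
      and "cxy = (\<lambda>(hu, hv, hx, hy, hz). constC V * (hx / (2 * u0)))"
      and "cxz = (\<lambda>(hu, hv, hx, hy, hz). constC V * (- hx / (2 * u0) + hy / u0))"
      and "cyz = (\<lambda>(hu, hv, hx, hy, hz). constC V * (hz / u0))"
  have "range T = {(a, b, c). even (a - c) \<and> even (b - c)}"
  proof (intro set_eqI iffI)
    fix t :: "int \<times> int \<times> int" assume "t \<in> {(a, b, c). even (a - c) \<and> even (b - c)}"
    then obtain a b c where t: "t = (a, b, c)" "even (a - c)" "even (b - c)" by auto
    obtain m n where "a - c = 2 * m" "b - c = 2 * n" using t(2,3) by (metis evenE)
    with t show "t \<in> range T" by (auto simp: T_def intro!: image_eqI[where x = "(m, n, c)"])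
  qed (auto simp: T_def)
  then have sym: "cube_symmetric (range T)" by (simp add: cube_symmetric_def)
  show ?thesis unfolding BCC_params_def u0_def[symmetric]
  proof (rule Ef_critical_if_cube_symmetric[OF assms box _ _ sym, where \<kappa> = "constC V / (4 * u0)"
      and K = 11 and cxx = cxx and cyy = cyy and czz = czz and cxy = cxy and cxz = cxz and cyz = cyz])
    show "inj T" "T (0, 0, 0) = (0, 0, 0)" by (auto simp: T_def inj_def)
    show "QL V (u0, 1, 0, 1/2, 1/2) k = constC V / (4 * u0) * sqnorm (T k)" for k
      using u0 by (cases k) (simp add: QL_def T_def power2_eq_square field_simps)
    show "QL_deriv V (u0, 1, 0, 1/2, 1/2) k h = (case T k of (a, b, c) \<Rightarrow>
      cxx h * of_int a ^ 2 + cyy h * of_int b ^ 2 + czz h * of_int c ^ 2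
      + cxy h * (of_int a * of_int b) + cxz h * (of_int a * of_int c) + cyz h * (of_int b * of_int c))"
      for h k
      using u0 by (cases k; cases h) (simp add: QL_deriv_def T_def cxx_def cyy_def czz_def cxy_def
          cxz_def cyz_def Let_def power2_eq_square field_simps)
    show "sqnorm (T k) \<le> 11 * sqnorm k" for k
      using sqnorm_linear_le[where a = 2 and b = 0 and c = 1 and d = 0 and e = 2 and f = 1
          and g = 0 and h = 0 and i = 1 and m = "fst k" and n = "fst (snd k)" and p = "snd (snd k)"]
      by (cases k) (simp add: T_def)
    have "hu * u0 = hu / (2 * u0^2)" "hv * u0^2 = hv / (2 * u0)" for hu hv
      using u0 by (simp_all add: field_simps power2_eq_square power3_eq_cube)
    then show "cxx h + cyy h + czz h = 0" for h
      by (cases h) (simp add: cxx_def cyy_def czz_def algebra_simps)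
  qed
qed

lemma SC_critical:
  assumes "class_F f" "V > 0"
  shows "(Ef f V has_derivative (\<lambda>_. 0)) (at SC_params)"
proof -
  define u0 :: real where "u0 = 2 powr (1/3)"
  have u0: "u0 > 0" "u0^3 = 2"
    unfolding u0_def cube_of_2_powr by simp_all
  have "2 powr (-1) < u0" "u0 < 2 powr 1" unfolding u0_def by (subst powr_less_cancel_iff; simp)+
  then have box: "(u0, 1, 0, 0, 0) \<in> param_box" by (simp add: param_box_def powr_minus)
  define cxx cyy czz cxy cxz cyz :: "real \<times> real \<times> real \<times> real \<times> real \<Rightarrow> real"
    where "cxx = (\<lambda>(hu, hv, hx, hy, hz). constC V * (- hu / u0^2))"
      and "cyy = (\<lambda>(hu, hv, hx, hy, hz). constC V * (- hu / u0^2 + 2 * hv / u0))"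
      and "czz = (\<lambda>(hu, hv, hx, hy, hz). constC V * (hu * u0 - hv * u0^2))"
      and "cxy = (\<lambda>(hu, hv, hx, hy, hz). constC V * (2 * hx / u0))"
      and "cxz = (\<lambda>(hu, hv, hx, hy, hz). constC V * (2 * hy / u0))"
      and "cyz = (\<lambda>(hu, hv, hx, hy, hz). constC V * (2 * hz / u0))"
  show ?thesis unfolding SC_params_def u0_def[symmetric]
  proof (rule Ef_critical_if_cube_symmetric[OF assms box, where T = id and \<kappa> = "constC V / u0"
      and K = 1 and cxx = cxx and cyy = cyy and czz = czz and cxy = cxy and cxz = cxz and cyz = cyz])
    show "QL V (u0, 1, 0, 0, 0) k = constC V / u0 * sqnorm (id k)" for k
      using u0 by (cases k) (simp add: QL_def)
    show "QL_deriv V (u0, 1, 0, 0, 0) k h = (case id k of (a, b, c) \<Rightarrow>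
      cxx h * of_int a ^ 2 + cyy h * of_int b ^ 2 + czz h * of_int c ^ 2
      + cxy h * (of_int a * of_int b) + cxz h * (of_int a * of_int c) + cyz h * (of_int b * of_int c))"
      for h k
      using u0 by (cases k; cases h) (simp add: QL_deriv_def cxx_def cyy_def czz_def cxy_def cxz_def
          cyz_def Let_def power2_eq_square field_simps)
    have "hu * u0 = 2 * hu / u0^2" "hv * u0^2 = 2 * hv / u0" for hu hv
      using u0 by (simp_all add: field_simps power2_eq_square power3_eq_cube)
    then show "cxx h + cyy h + czz h = 0" for h
      by (cases h) (simp add: cxx_def cyy_def czz_def algebra_simps)
  qed (auto simp: cube_symmetric_def)
qed

theorem proposition3p2:
  fixes f :: "real \<Rightarrow> real" and V :: real
  assumes "class_F f" and "V > 0"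
  shows "(Ef f V has_derivative (\<lambda>_. 0)) (at FCC_params)
       \<and> (Ef f V has_derivative (\<lambda>_. 0)) (at BCC_params)
       \<and> (Ef f V has_derivative (\<lambda>_. 0)) (at SC_params)"
  using FCC_critical[OF assms] BCC_critical[OF assms] SC_critical[OF assms] by blast

end
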